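(* Let $\lambda\subset\mathbb{H}$ be a (complex) Lagrangian subspace such that $h(v,v)\ge 0$ for every $v\in\lambda$. Then $\lambda$ is transverse to $H_1=H\oplus 0$, i.e. $\lambda\cap H_1=\{0\}$ and $\lambda+H_1=\mathbb{H}$.
   Context: $H$ is a complex (separable) Hilbert space with inner product $\langle\cdot,\cdot\rangle$ (antilinear in the second variable), $\tau$ is an isometric antilinear involution of $H$, and $(\xi,\eta)=\langle \xi,\tau\eta\rangle$ is the associated symmetric bilinear form. $\mathbb{H}=H\oplus H=\{\eta\oplus\xi\}$ with Hilbert inner product $\langle \eta\oplus\xi,\eta'\oplus\xi'\rangle=\langle\eta,\eta'\rangle+\langle\xi,\xi'\rangle$ and complex symplectic form $\omega(\eta\oplus\xi,\eta'\oplus\xi')=(\eta,\xi')-(\xi,\eta')$. For a subspace $F$, $F^{\circ}$ denotes its $\omega$-orthogonal; a Lagrangian is a subspace $\lambda$ with $\lambda^\circ=\lambda$. $H_1=H\oplus 0$, $H_2=0\oplus H$. The Hermitian form $h$ on $\mathbb{H}$ is $h(\eta\oplus\xi,\eta'\oplus\xi')=\langle\xi,\xi'\rangle-\langle\eta,\eta'\rangle$. *)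

theory Defs
  imports Complex_Main "HOL-Library.Product_Plus" "HOL-Library.Countable_Set"
begin

definition hnorm :: "('h \<Rightarrow> 'h \<Rightarrow> complex) \<Rightarrow> 'h \<Rightarrow> real" where
  "hnorm ip x = sqrt (Re (ip x x))"

definition complex_hilbert_space ::
  "(complex \<Rightarrow> 'h::ab_group_add \<Rightarrow> 'h) \<Rightarrow> ('h \<Rightarrow> 'h \<Rightarrow> complex) \<Rightarrow> bool" where
  "complex_hilbert_space smul ip \<longleftrightarrow>
     vector_space smul \<and>
     (\<forall>x y z. ip (x + y) z = ip x z + ip y z) \<and>
     (\<forall>c x y. ip (smul c x) y = c * ip x y) \<and>
     (\<forall>x y. ip y x = cnj (ip x y)) \<and>
     (\<forall>x. Re (ip x x) \<ge> 0) \<and>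
     (\<forall>x. ip x x = 0 \<longrightarrow> x = 0) \<and>
     \<comment> \<open>completeness\<close>
     (\<forall>X::nat \<Rightarrow> 'h. (\<forall>e>0. \<exists>N. \<forall>m\<ge>N. \<forall>n\<ge>N. hnorm ip (X m - X n) < e) \<longrightarrow>
         (\<exists>L. \<forall>e>0. \<exists>N. \<forall>n\<ge>N. hnorm ip (X n - L) < e)) \<and>
     \<comment> \<open>separability\<close>
     (\<exists>D. countable D \<and> (\<forall>x. \<forall>e>0. \<exists>d\<in>D. hnorm ip (x - d) < e))"

definition isometric_antilinear_involution ::
  "(complex \<Rightarrow> 'h::ab_group_add \<Rightarrow> 'h) \<Rightarrow> ('h \<Rightarrow> 'h \<Rightarrow> complex) \<Rightarrow> ('h \<Rightarrow> 'h) \<Rightarrow> bool" where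
  "isometric_antilinear_involution smul ip tau \<longleftrightarrow>
     (\<forall>x y. tau (x + y) = tau x + tau y) \<and>
     (\<forall>c x. tau (smul c x) = smul (cnj c) (tau x)) \<and>
     (\<forall>x. hnorm ip (tau x) = hnorm ip x) \<and>
     (\<forall>x. tau (tau x) = x)"

definition bform :: "('h \<Rightarrow> 'h \<Rightarrow> complex) \<Rightarrow> ('h \<Rightarrow> 'h) \<Rightarrow> 'h \<Rightarrow> 'h \<Rightarrow> complex" where
  "bform ip tau x y = ip x (tau y)"

text \<open>The doubled space HH = H (+) H is modelled as 'h \<times> 'h, the pair (eta, xi)
  standing for eta (+) xi.\<close>

definition pscale :: "(complex \<Rightarrow> 'h \<Rightarrow> 'h) \<Rightarrow> complex \<Rightarrow> 'h \<times> 'h \<Rightarrow> 'h \<times> 'h" where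
  "pscale smul c v = (smul c (fst v), smul c (snd v))"

definition complex_subspace :: "(complex \<Rightarrow> 'h::ab_group_add \<Rightarrow> 'h) \<Rightarrow> ('h \<times> 'h) set \<Rightarrow> bool" where
  "complex_subspace smul F \<longleftrightarrow> 0 \<in> F \<and> (\<forall>v\<in>F. \<forall>w\<in>F. v + w \<in> F) \<and>
     (\<forall>c. \<forall>v\<in>F. pscale smul c v \<in> F)"

definition omega :: "('h::ab_group_add \<Rightarrow> 'h \<Rightarrow> complex) \<Rightarrow> ('h \<Rightarrow> 'h) \<Rightarrow> 'h \<times> 'h \<Rightarrow> 'h \<times> 'h \<Rightarrow> complex" where
  "omega ip tau v w = bform ip tau (fst v) (snd w) - bform ip tau (snd v) (fst w)"

definition omega_orth :: "('h::ab_group_add \<Rightarrow> 'h \<Rightarrow> complex) \<Rightarrow> ('h \<Rightarrow> 'h) \<Rightarrow> ('h \<times> 'h) set \<Rightarrow> ('h \<times> 'h) set" where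
  "omega_orth ip tau F = {v. \<forall>w\<in>F. omega ip tau v w = 0}"

definition lagrangian :: "(complex \<Rightarrow> 'h::ab_group_add \<Rightarrow> 'h) \<Rightarrow> ('h \<Rightarrow> 'h \<Rightarrow> complex) \<Rightarrow> ('h \<Rightarrow> 'h) \<Rightarrow> ('h \<times> 'h) set \<Rightarrow> bool" where
  "lagrangian smul ip tau L \<longleftrightarrow> complex_subspace smul L \<and> omega_orth ip tau L = L"

definition hform :: "('h \<Rightarrow> 'h \<Rightarrow> complex) \<Rightarrow> 'h \<times> 'h \<Rightarrow> 'h \<times> 'h \<Rightarrow> complex" where
  "hform ip v w = ip (snd v) (snd w) - ip (fst v) (fst w)"

definition H1 :: "('h::zero \<times> 'h) set" where
  "H1 = {(x, 0) | x. True}"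

end

theory Submission
  imports Defs
begin

text \<open>
  The intersection with H1 is trivial at once: for (x, 0) in L the hermitian form gives
  -|x|^2 >= 0.  For the sum L + H1 to be everything it suffices that every y in H occurs as
  a second component of L.  Consider the subspace D = tau(snd L) of H.  By the definition of
  omega, a vector z orthogonal to D yields (z, 0) omega-orthogonal to L, hence in L, hence
  z = 0.  So it suffices that D is complete, for then the projection theorem decomposes
  tau y = m + z with m in D and z orthogonal to D, forcing tau y = m.  Completeness of D
  comes from nonnegativity (|fst v| <= |snd v| on L, so Cauchy sequences in D lift to Cauchy
  sequences in L) and from L = L^omega being closed.
\<close>

locale hilbert_space =
  fixes smul :: "complex \<Rightarrow> 'h::ab_group_add \<Rightarrow> 'h"
    and ip :: "'h \<Rightarrow> 'h \<Rightarrow> complex"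
  assumes hilbert: "complex_hilbert_space smul ip"
begin

sublocale vector_space smul
  using hilbert unfolding complex_hilbert_space_def by blast

lemma ip_add_left: "ip (x + y) z = ip x z + ip y z"
  and ip_smul_left: "ip (smul c x) y = c * ip x y"
  and ip_cnj_sym: "ip y x = cnj (ip x y)"
  and ip_self_Re_nonneg: "Re (ip x x) \<ge> 0"
  and ip_self_eq_0: "ip x x = 0 \<Longrightarrow> x = 0"
  using hilbert unfolding complex_hilbert_space_def by blast+

lemma ip_add_right: "ip x (y + z) = ip x y + ip x z"
  by (metis ip_add_left ip_cnj_sym complex_cnj_add)

lemma ip_smul_right: "ip x (smul c y) = cnj c * ip x y"
  by (metis complex_cnj_cnj complex_cnj_mult ip_smul_left ip_cnj_sym)

lemma ip_zero_left [simp]: "ip 0 y = 0"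
  using ip_add_left[of 0 0 y] by simp

lemma ip_zero_right [simp]: "ip y 0 = 0"
  using ip_add_right[of y 0 0] by simp

lemma ip_diff_left: "ip (x - z) y = ip x y - ip z y"
  using ip_smul_left[of "-1" z y] ip_add_left[of x "- z" y] by simp

lemma ip_diff_right: "ip y (x - z) = ip y x - ip y z"
  using ip_smul_right[of y "-1" z] ip_add_right[of y x "- z"] by simp

definition sqnorm :: "'h \<Rightarrow> real" where
  "sqnorm x = Re (ip x x)"

lemma sqnorm_zero [simp]: "sqnorm 0 = 0"
  unfolding sqnorm_def by simp

lemma sqnorm_nonneg: "sqnorm x \<ge> 0"
  unfolding sqnorm_def by (rule ip_self_Re_nonneg)

lemma ip_self: "ip x x = complex_of_real (sqnorm x)"
  unfolding sqnorm_def using ip_cnj_sym[of x x] by (simp add: complex_eq_iff)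

lemma sqnorm_eq_0: "sqnorm x = 0 \<Longrightarrow> x = 0"
  using ip_self ip_self_eq_0 by simp

lemma hnorm_sqnorm: "hnorm ip x = sqrt (sqnorm x)"
  unfolding hnorm_def sqnorm_def ..

lemma hnorm_nonneg: "hnorm ip x \<ge> 0"
  by (simp add: hnorm_sqnorm sqnorm_nonneg)

lemma sqnorm_hnorm: "sqnorm x = (hnorm ip x)\<^sup>2"
  using sqnorm_nonneg[of x] by (simp add: hnorm_sqnorm)

lemma hnorm_less_iff: "e > 0 \<Longrightarrow> hnorm ip x < e \<longleftrightarrow> sqnorm x < e\<^sup>2"
  using real_sqrt_less_iff[of "sqnorm x" "e\<^sup>2"] by (simp add: hnorm_sqnorm)

lemma sqnorm_minus_commute: "sqnorm (x - y) = sqnorm (y - x)"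
  unfolding sqnorm_def by (simp add: ip_diff_left ip_diff_right)

lemma sqnorm_smul: "sqnorm (smul c x) = (cmod c)\<^sup>2 * sqnorm x"
proof -
  have "ip (smul c x) (smul c x) = c * cnj c * ip x x"
    by (simp add: ip_smul_left ip_smul_right)
  also have "\<dots> = complex_of_real ((cmod c)\<^sup>2 * sqnorm x)"
    by (simp add: ip_self complex_mult_cnj cmod_power2)
  finally show ?thesis unfolding sqnorm_def by simp
qed

lemma sqnorm_add: "sqnorm (x + y) = sqnorm x + sqnorm y + 2 * Re (ip x y)"
  unfolding sqnorm_def by (simp add: ip_add_left ip_add_right ip_cnj_sym[of y x])

lemma sqnorm_diff: "sqnorm (x - y) = sqnorm x + sqnorm y - 2 * Re (ip x y)"
  unfolding sqnorm_def by (simp add: ip_diff_left ip_diff_right ip_cnj_sym[of y x])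

lemma parallelogram: "sqnorm (x + y) + sqnorm (x - y) = 2 * sqnorm x + 2 * sqnorm y"
  unfolding sqnorm_add sqnorm_diff by simp

lemma sqnorm_diff_smul_ip:
  "sqnorm (x - smul (complex_of_real s * ip x y) y)
     = sqnorm x - 2 * s * (cmod (ip x y))\<^sup>2 + s\<^sup>2 * (cmod (ip x y))\<^sup>2 * sqnorm y"
proof -
  define p where "p = ip x y"
  have pp: "p * cnj p = complex_of_real ((cmod p)\<^sup>2)"
    by (simp add: complex_norm_square[symmetric])
  have "ip (x - smul (complex_of_real s * p) y) (x - smul (complex_of_real s * p) y)
      = complex_of_real (sqnorm x) - 2 * s * (p * cnj p) + s\<^sup>2 * (p * cnj p) * complex_of_real (sqnorm y)"
    by (simp add: ip_diff_left ip_diff_right ip_smul_left ip_smul_right ip_cnj_sym[of y x]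
        ip_self[of x] ip_self[of y] p_def power2_eq_square algebra_simps)
  also have "\<dots> = complex_of_real (sqnorm x - 2 * s * (cmod p)\<^sup>2 + s\<^sup>2 * (cmod p)\<^sup>2 * sqnorm y)"
    unfolding pp by simp
  finally show ?thesis unfolding sqnorm_def p_def by simp
qed

lemma cauchy_schwarz: "cmod (ip x y) \<le> hnorm ip x * hnorm ip y"
proof (cases "y = 0")
  case False
  then have y: "sqnorm y > 0"
    using sqnorm_nonneg[of y] sqnorm_eq_0[of y] by linarith
  have "0 \<le> sqnorm (x - smul (complex_of_real (1 / sqnorm y) * ip x y) y)"
    by (rule sqnorm_nonneg)
  also have "\<dots> = sqnorm x - (cmod (ip x y))\<^sup>2 / sqnorm y"
    unfolding sqnorm_diff_smul_ip using y by (simp add: field_simps power2_eq_square)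
  finally have "(cmod (ip x y))\<^sup>2 \<le> (hnorm ip x * hnorm ip y)\<^sup>2"
    using y by (simp add: field_simps sqnorm_hnorm power_mult_distrib)
  then show ?thesis
    by (rule power2_le_imp_le) (simp add: hnorm_nonneg)
qed (simp add: hnorm_nonneg)

lemma hnorm_triangle: "hnorm ip (x + y) \<le> hnorm ip x + hnorm ip y"
proof -
  have "Re (ip x y) \<le> hnorm ip x * hnorm ip y"
    using cauchy_schwarz[of x y] complex_Re_le_cmod[of "ip x y"] by linarith
  then have "(hnorm ip (x + y))\<^sup>2 \<le> (hnorm ip x + hnorm ip y)\<^sup>2"
    using sqnorm_add[of x y] by (simp add: sqnorm_hnorm power2_sum)
  then show ?thesis
    by (rule power2_le_imp_le) (simp add: hnorm_nonneg)
qed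

definition hcauchy :: "(nat \<Rightarrow> 'h) \<Rightarrow> bool" where
  "hcauchy X \<longleftrightarrow> (\<forall>e>0. \<exists>N. \<forall>m\<ge>N. \<forall>n\<ge>N. hnorm ip (X m - X n) < e)"

definition hconv :: "(nat \<Rightarrow> 'h) \<Rightarrow> 'h \<Rightarrow> bool" where
  "hconv X l \<longleftrightarrow> (\<lambda>n. hnorm ip (X n - l)) \<longlonglongrightarrow> 0"

definition hcomplete :: "'h set \<Rightarrow> bool" where
  "hcomplete D \<longleftrightarrow> (\<forall>X. (\<forall>n. X n \<in> D) \<longrightarrow> hcauchy X \<longrightarrow> (\<exists>l\<in>D. hconv X l))"

lemma hcauchy_converges:
  assumes "hcauchy X"
  shows "\<exists>l. hconv X l"
proof -
  have "\<forall>X::nat \<Rightarrow> 'h. (\<forall>e>0. \<exists>N. \<forall>m\<ge>N. \<forall>n\<ge>N. hnorm ip (X m - X n) < e) \<longrightarrow>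
          (\<exists>l. \<forall>e>0. \<exists>N. \<forall>n\<ge>N. hnorm ip (X n - l) < e)"
    using hilbert unfolding complex_hilbert_space_def by (elim conjE)
  then obtain l where "\<forall>e>0. \<exists>N. \<forall>n\<ge>N. hnorm ip (X n - l) < e"
    using assms unfolding hcauchy_def by blast
  then have "hconv X l"
    unfolding hconv_def LIMSEQ_iff by (simp add: hnorm_nonneg)
  then show ?thesis ..
qed

lemma hcauchy_if_sqnorm_bound:
  assumes r: "r \<longlonglongrightarrow> 0" and bound: "\<And>m n. sqnorm (X m - X n) \<le> r m + r n"
  shows "hcauchy X"
  unfolding hcauchy_def
proof (intro allI impI)
  fix e :: real
  assume e: "e > 0"
  then have "eventually (\<lambda>n. r n < e\<^sup>2 / 2) sequentially"
    by (intro order_tendstoD(2)[OF r]) simp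
  then obtain N where N: "\<And>n. n \<ge> N \<Longrightarrow> r n < e\<^sup>2 / 2"
    unfolding eventually_sequentially by blast
  have "hnorm ip (X m - X n) < e" if "m \<ge> N" "n \<ge> N" for m n
    using bound[of m n] N[OF that(1)] N[OF that(2)] hnorm_less_iff[OF e] by simp
  then show "\<exists>N. \<forall>m\<ge>N. \<forall>n\<ge>N. hnorm ip (X m - X n) < e" by blast
qed

lemma hcauchy_dominated:
  assumes "\<And>m n. hnorm ip (Y m - Y n) \<le> hnorm ip (X m - X n)" and "hcauchy X"
  shows "hcauchy Y"
  using assms unfolding hcauchy_def by (meson le_less_trans)

lemma hconv_ip_left:
  assumes "hconv X a"
  shows "(\<lambda>n. ip (X n) y) \<longlonglongrightarrow> ip a y"
proof -
  have "\<forall>n. cmod (ip (X n) y - ip a y) \<le> norm (hnorm ip (X n - a)) * hnorm ip y"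
    using cauchy_schwarz hnorm_nonneg by (simp add: ip_diff_left[symmetric])
  then have "(\<lambda>n. ip (X n) y - ip a y) \<longlonglongrightarrow> 0"
    by (rule tendsto_0_le[OF assms[unfolded hconv_def] always_eventually])
  then show ?thesis by (simp add: LIM_zero_iff)
qed

text \<open>For a subspace D and a lower bound d of the squared distances from t to D, two points
  of D that almost realise d are close to each other (parallelogram law at their midpoint).\<close>
lemma midpoint_estimate:
  assumes D: "subspace D" and "a \<in> D" "b \<in> D" and d: "\<forall>x\<in>D. d \<le> sqnorm (t - x)"
  shows "sqnorm (a - b) \<le> 2 * sqnorm (t - a) + 2 * sqnorm (t - b) - 4 * d"
proof -
  have mid: "smul (1/2) (a + b) \<in> D"
    using assms by (simp add: subspace_add subspace_scale)
  have "smul 2 (t - smul (1/2) (a + b)) = smul 2 t - smul (2 * (1/2)) (a + b)"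
    by (simp only: scale_right_diff_distrib scale_scale)
  also have "\<dots> = (t - a) + (t - b)"
    using scale_left_distrib[of 1 1 t] by (simp add: algebra_simps)
  finally have "sqnorm ((t - a) + (t - b)) = sqnorm (smul 2 (t - smul (1/2) (a + b)))"
    by simp
  also have "\<dots> = 4 * sqnorm (t - smul (1/2) (a + b))"
    by (simp add: sqnorm_smul)
  also have "\<dots> \<ge> 4 * d"
    using d mid by simp
  finally have "sqnorm ((t - a) + (t - b)) \<ge> 4 * d" .
  moreover have "sqnorm ((t - a) - (t - b)) = sqnorm (a - b)"
    by (simp add: sqnorm_minus_commute)
  ultimately show ?thesis
    using parallelogram[of "t - a" "t - b"] by linarith
qed

lemma minimizing_sequence_hcauchy:
  assumes D: "subspace D" and X_in: "\<And>n. X n \<in> D" and d_le: "\<forall>x\<in>D. d \<le> sqnorm (t - x)"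
    and X_close: "\<And>n. sqnorm (t - X n) < d + inverse (real (Suc n))"
  shows "hcauchy X"
proof (rule hcauchy_if_sqnorm_bound)
  show "(\<lambda>n. 2 * inverse (real (Suc n))) \<longlonglongrightarrow> 0"
    using tendsto_mult_right_zero[OF LIMSEQ_inverse_real_of_nat] by simp
  show "sqnorm (X m - X n) \<le> 2 * inverse (real (Suc m)) + 2 * inverse (real (Suc n))" for m n
    using midpoint_estimate[OF D X_in X_in d_le, of m n] X_close[of m] X_close[of n] by linarith
qed

lemma limit_of_minimizing_sequence:
  assumes lim: "hconv X m" and d: "d \<ge> 0"
    and X_close: "\<And>n. sqnorm (t - X n) < d + inverse (real (Suc n))"
  shows "sqnorm (t - m) \<le> d"
proof -
  have "hnorm ip (t - m) \<le> sqrt d"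
  proof (rule LIMSEQ_le_const)
    have "(\<lambda>n. d + inverse (real (Suc n))) \<longlonglongrightarrow> d"
      using tendsto_add[OF tendsto_const LIMSEQ_inverse_real_of_nat] by simp
    from tendsto_add[OF tendsto_real_sqrt[OF this] lim[unfolded hconv_def]]
    show "(\<lambda>n. sqrt (d + inverse (real (Suc n))) + hnorm ip (X n - m)) \<longlonglongrightarrow> sqrt d"
      by simp
    have "hnorm ip (t - m) \<le> sqrt (d + inverse (real (Suc n))) + hnorm ip (X n - m)" for n
    proof -
      have "hnorm ip (t - m) \<le> hnorm ip (t - X n) + hnorm ip (X n - m)"
        using hnorm_triangle[of "t - X n" "X n - m"] by simp
      moreover have "hnorm ip (t - X n) \<le> sqrt (d + inverse (real (Suc n)))"
        unfolding hnorm_sqnorm using X_close[of n] by (intro real_sqrt_le_mono) simp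
      ultimately show ?thesis by linarith
    qed
    then show "\<exists>N. \<forall>n\<ge>N. hnorm ip (t - m) \<le> sqrt (d + inverse (real (Suc n))) + hnorm ip (X n - m)"
      by blast
  qed
  then have "(hnorm ip (t - m))\<^sup>2 \<le> (sqrt d)\<^sup>2"
    by (rule power_mono) (rule hnorm_nonneg)
  then show ?thesis
    unfolding sqnorm_hnorm using d by simp
qed

text \<open>In a complete subspace every point has a best approximation: the limit of a minimizing
  sequence.\<close>
lemma best_approximation_exists:
  assumes D: "subspace D" and complete: "hcomplete D"
  shows "\<exists>m\<in>D. \<forall>x\<in>D. sqnorm (t - m) \<le> sqnorm (t - x)"
proof -
  define d where "d = (INF x\<in>D. sqnorm (t - x))"
  have bdd: "bdd_below ((\<lambda>x. sqnorm (t - x)) ` D)"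
    by (rule bdd_belowI[where m = 0]) (auto simp: sqnorm_nonneg)
  have ne: "D \<noteq> {}"
    using subspace_0[OF D] by blast
  have d_le: "\<forall>x\<in>D. d \<le> sqnorm (t - x)"
    unfolding d_def using cINF_lower[OF bdd] by blast
  have d_nonneg: "d \<ge> 0"
    unfolding d_def using ne sqnorm_nonneg by (intro cINF_greatest) auto
  have "\<exists>x\<in>D. sqnorm (t - x) < d + inverse (real (Suc n))" for n
    using cINF_less_iff[OF ne bdd, of "d + inverse (real (Suc n))"] unfolding d_def[symmetric]
    by simp
  then obtain X where X_in: "\<And>n. X n \<in> D"
    and X_close: "\<And>n. sqnorm (t - X n) < d + inverse (real (Suc n))"
    by metis
  obtain m where m: "m \<in> D" "hconv X m"
    using complete X_in minimizing_sequence_hcauchy[OF D X_in d_le X_close]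
    unfolding hcomplete_def by blast
  then have "sqnorm (t - m) \<le> d"
    using limit_of_minimizing_sequence d_nonneg X_close by blast
  then show ?thesis
    using m(1) d_le by (meson order_trans)
qed

text \<open>A best approximation m of t in a subspace D leaves an error t - m orthogonal to D:
  otherwise moving m slightly along the offending direction would decrease the distance.\<close>
lemma best_approximation_orthogonal:
  assumes D: "subspace D" and m: "m \<in> D" and best: "\<forall>x\<in>D. sqnorm (t - m) \<le> sqnorm (t - x)"
    and y: "y \<in> D"
  shows "ip (t - m) y = 0"
proof -
  define z where "z = t - m"
  define s where "s = 1 / (sqnorm y + 1)"
  define q where "q = (cmod (ip z y))\<^sup>2"
  have s_pos: "s > 0" and s_y: "s * sqnorm y \<le> 1"
    unfolding s_def using sqnorm_nonneg[of y] by (simp_all add: field_simps)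
  have q_nonneg: "q \<ge> 0"
    unfolding q_def by simp
  have "m + smul (complex_of_real s * ip z y) y \<in> D"
    using D m y by (simp add: subspace_add subspace_scale)
  then have "sqnorm z \<le> sqnorm (z - smul (complex_of_real s * ip z y) y)"
    using best unfolding z_def by (metis diff_diff_eq)
  then have "2 * s * q \<le> (s * q) * (s * sqnorm y)"
    unfolding sqnorm_diff_smul_ip q_def by (simp add: power2_eq_square algebra_simps)
  also have "\<dots> \<le> s * q"
    using s_y s_pos q_nonneg by (simp add: mult_left_le)
  finally have "q = 0"
    using s_pos q_nonneg by (simp add: mult_le_0_iff)
  then show ?thesis
    unfolding q_def z_def by simp
qed

lemma projection_theorem:
  assumes "subspace D" and "hcomplete D"
  shows "\<exists>m\<in>D. \<forall>y\<in>D. ip (t - m) y = 0"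
  using best_approximation_exists[OF assms] best_approximation_orthogonal[OF assms(1)] by blast

end

locale hilbert_space_with_conjugation = hilbert_space smul ip
  for smul :: "complex \<Rightarrow> 'h::ab_group_add \<Rightarrow> 'h" and ip +
  fixes tau :: "'h \<Rightarrow> 'h"
  assumes conjugation: "isometric_antilinear_involution smul ip tau"
begin

lemma tau_add: "tau (x + y) = tau x + tau y"
  and tau_smul: "tau (smul c x) = smul (cnj c) (tau x)"
  and hnorm_tau: "hnorm ip (tau x) = hnorm ip x"
  and tau_tau: "tau (tau x) = x"
  using conjugation unfolding isometric_antilinear_involution_def by blast+

lemma tau_zero: "tau 0 = 0"
  using tau_add[of 0 0] by simp

lemma tau_diff: "tau (x - y) = tau x - tau y"
  using tau_smul[of "-1" y] tau_add[of x "- y"] by simp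

end

locale lagrangian_subspace = hilbert_space_with_conjugation smul ip tau
  for smul :: "complex \<Rightarrow> 'h::ab_group_add \<Rightarrow> 'h" and ip tau +
  fixes L :: "('h \<times> 'h) set"
  assumes lagrangian: "lagrangian smul ip tau L"
begin

lemma L_zero: "0 \<in> L"
  and L_add: "v \<in> L \<Longrightarrow> w \<in> L \<Longrightarrow> v + w \<in> L"
  and L_pscale: "v \<in> L \<Longrightarrow> pscale smul c v \<in> L"
  using lagrangian unfolding lagrangian_def complex_subspace_def by blast+

lemma L_diff:
  assumes "v \<in> L" and "w \<in> L"
  shows "v - w \<in> L"
proof -
  have "pscale smul (-1) w = - w"
    by (cases w) (simp add: pscale_def)
  then show ?thesis
    using L_add[OF assms(1) L_pscale[OF assms(2), of "-1"]] by simp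
qed

lemma L_iff_omega_orth: "v \<in> L \<longleftrightarrow> (\<forall>w\<in>L. omega ip tau v w = 0)"
  using lagrangian unfolding lagrangian_def omega_orth_def by blast

text \<open>Being an omega-orthogonal complement, L is closed: omega is continuous in its first
  variable.\<close>
lemma L_closed:
  assumes w: "\<And>n. w n \<in> L"
    and a: "hconv (\<lambda>n. fst (w n)) a" and b: "hconv (\<lambda>n. snd (w n)) b"
  shows "(a, b) \<in> L"
  unfolding L_iff_omega_orth
proof
  fix v assume v: "v \<in> L"
  have "(\<lambda>n. omega ip tau (w n) v) \<longlonglongrightarrow> omega ip tau (a, b) v"
    using tendsto_diff[OF hconv_ip_left[OF a] hconv_ip_left[OF b]]
    by (simp add: omega_def bform_def)
  moreover have "(\<lambda>n. omega ip tau (w n) v) = (\<lambda>n. 0)"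
    using w v L_iff_omega_orth by blast
  ultimately show "omega ip tau (a, b) v = 0"
    using LIMSEQ_unique tendsto_const by metis
qed

definition conj_snd :: "'h set" where
  "conj_snd = (\<lambda>v. tau (snd v)) ` L"

lemma subspace_conj_snd: "subspace conj_snd"
  unfolding subspace_def conj_snd_def
proof (intro conjI ballI allI)
  show "0 \<in> (\<lambda>v. tau (snd v)) ` L"
    using L_zero tau_zero by force
  fix c x y assume x: "x \<in> (\<lambda>v. tau (snd v)) ` L" and y: "y \<in> (\<lambda>v. tau (snd v)) ` L"
  show "x + y \<in> (\<lambda>v. tau (snd v)) ` L"
  proof -
    obtain v w where "v \<in> L" "x = tau (snd v)" "w \<in> L" "y = tau (snd w)"
      using x y by blast
    then have "x + y = tau (snd (v + w))" and "v + w \<in> L"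
      by (simp_all add: tau_add L_add)
    then show ?thesis by blast
  qed
  show "smul c x \<in> (\<lambda>v. tau (snd v)) ` L"
  proof -
    obtain v where "v \<in> L" "x = tau (snd v)"
      using x by blast
    then have "smul c x = tau (snd (pscale smul (cnj c) v))" and "pscale smul (cnj c) v \<in> L"
      by (simp_all add: pscale_def tau_smul L_pscale[unfolded pscale_def])
    then show ?thesis by blast
  qed
qed

lemma orthogonal_conj_snd_in_L:
  assumes "\<forall>y\<in>conj_snd. ip z y = 0"
  shows "(z, 0) \<in> L"
  using assms unfolding L_iff_omega_orth conj_snd_def by (simp add: omega_def bform_def)

end

locale nonneg_lagrangian = lagrangian_subspace smul ip tau L
  for smul :: "complex \<Rightarrow> 'h::ab_group_add \<Rightarrow> 'h" and ip tau L +
  assumes nonneg: "\<forall>v\<in>L. Re (hform ip v v) \<ge> 0"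
begin

text \<open>Nonnegativity of h says that the first component is dominated by the second.\<close>
lemma fst_dominated: "v \<in> L \<Longrightarrow> hnorm ip (fst v) \<le> hnorm ip (snd v)"
  using nonneg unfolding hform_def hnorm_def by (simp add: real_sqrt_le_mono)

lemma L_inter_H1: "(x, 0) \<in> L \<Longrightarrow> x = 0"
  using fst_dominated[of "(x, 0)"] sqnorm_nonneg[of x] sqnorm_eq_0[of x] by (simp add: hnorm_sqnorm)

text \<open>Cauchy sequences in conj_snd lift to Cauchy sequences in L, by the isometry tau and
  the domination of the first components; so closedness of L makes conj_snd complete.\<close>
lemma hcomplete_conj_snd: "hcomplete conj_snd"
  unfolding hcomplete_def
proof (intro allI impI)
  fix X assume X: "\<forall>n. X n \<in> conj_snd" and cauchy: "hcauchy X"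
  then have "\<forall>n. \<exists>v. v \<in> L \<and> X n = tau (snd v)"
    unfolding conj_snd_def by blast
  from choice[OF this] obtain w where w: "\<And>n. w n \<in> L" and X_eq: "\<And>n. X n = tau (snd (w n))"
    by blast
  have hnorm_snd: "hnorm ip (snd (w m) - snd (w n)) = hnorm ip (X m - X n)" for m n
    by (simp add: X_eq tau_diff[symmetric] hnorm_tau)
  have cauchy_snd: "hcauchy (\<lambda>n. snd (w n))"
    using hcauchy_dominated[OF _ cauchy] hnorm_snd by simp
  have cauchy_fst: "hcauchy (\<lambda>n. fst (w n))"
    using hcauchy_dominated[OF _ cauchy_snd] fst_dominated[OF L_diff[OF w w]] by simp
  obtain a b where a: "hconv (\<lambda>n. fst (w n)) a" and b: "hconv (\<lambda>n. snd (w n)) b"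
    using hcauchy_converges[OF cauchy_fst] hcauchy_converges[OF cauchy_snd] by blast
  have "(a, b) \<in> L"
    using w a b by (rule L_closed)
  then have "tau b \<in> conj_snd"
    unfolding conj_snd_def by force
  moreover have "hconv X (tau b)"
    using b unfolding hconv_def by (simp add: X_eq tau_diff[symmetric] hnorm_tau)
  ultimately show "\<exists>l\<in>conj_snd. hconv X l" ..
qed

text \<open>Every second component occurs in L: project tau y onto the complete subspace conj_snd;
  the error is orthogonal to conj_snd, hence lies in L \<inter> H1, hence vanishes.\<close>
lemma snd_surjective: "\<exists>x. (x, y) \<in> L"
proof -
  obtain m where m: "m \<in> conj_snd" and orth: "\<forall>d\<in>conj_snd. ip (tau y - m) d = 0"
    using projection_theorem[OF subspace_conj_snd hcomplete_conj_snd] by blast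
  have "tau y = m"
    using L_inter_H1[OF orthogonal_conj_snd_in_L[OF orth]] by simp
  then obtain v where "v \<in> L" "tau y = tau (snd v)"
    using m unfolding conj_snd_def by blast
  then have "(fst v, y) \<in> L"
    by (metis tau_tau prod.collapse)
  then show ?thesis ..
qed

end

theorem proposition2p1:
  fixes smul :: "complex \<Rightarrow> 'h::ab_group_add \<Rightarrow> 'h"
    and ip :: "'h \<Rightarrow> 'h \<Rightarrow> complex"
    and tau :: "'h \<Rightarrow> 'h"
    and L :: "('h \<times> 'h) set"
  assumes "complex_hilbert_space smul ip"
    and "isometric_antilinear_involution smul ip tau"
    and "lagrangian smul ip tau L"
    and "\<forall>v\<in>L. Re (hform ip v v) \<ge> 0"
  shows "L \<inter> H1 = {0} \<and> {v + w | v w. v \<in> L \<and> w \<in> H1} = UNIV"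
proof
  interpret nonneg_lagrangian smul ip tau L
    using assms by unfold_locales
  show "L \<inter> H1 = {0}"
    using L_zero L_inter_H1 by (auto simp: H1_def zero_prod_def)
  show "{v + w | v w. v \<in> L \<and> w \<in> H1} = UNIV"
  proof (intro set_eqI iffI)
    fix u :: "'h \<times> 'h"
    obtain x where "(x, snd u) \<in> L"
      using snd_surjective by blast
    moreover have "(fst u - x, 0) \<in> H1" and "u = (x, snd u) + (fst u - x, 0)"
      by (simp_all add: H1_def)
    ultimately show "u \<in> {v + w | v w. v \<in> L \<and> w \<in> H1}"
      by blast
  qed simp
qed

end
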